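(* There exist $\varepsilon_0>0$ and $n_0$ such that for every $\varepsilon\in(0,\varepsilon_0]$ and $n\ge n_0$ the following holds. Let $G$ be an $\varepsilon$-superextremal two-clique on $n$ vertices with partition $V(G)=A\uplus B$, and let $f,f'$ be two vertex-disjoint edges of $G$ each having one endpoint in $A$ and one in $B$. Then $G$ has a Hamilton cycle containing $f$ and $f'$.
   Context: For $X\subseteq V(G)$, $d(v,X)$ is the number of neighbours of $v$ in $X$. A graph $G$ on $n$ vertices is an $\varepsilon$-superextremal two-clique (with partition $A\uplus B$) if: (A1) $||A|-|B||\le\varepsilon n$; (A2) $d(a,A)\ge(1/2-\varepsilon)n$ for all but at most $\varepsilon n$ vertices $a\in A$; (A3) $d(a,A)\ge(1/4-\varepsilon)n$ for all $a\in A$; (A4) $d(b,B)\ge(1/2-\varepsilon)n$ for all but at most $\varepsilon n$ vertices $b\in B$; (A5) $d(b,B)\ge(1/4-\varepsilon)n$ for all $b\in B$. *)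

theory Defs
  imports Main "HOL-Library.Disjoint_Sets" Complex_Main
begin

definition simple_graph :: "'a set \<Rightarrow> ('a \<Rightarrow> 'a \<Rightarrow> bool) \<Rightarrow> bool" where
  "simple_graph V E \<longleftrightarrow> finite V \<and> (\<forall>x y. E x y \<longrightarrow> x \<in> V \<and> y \<in> V)
     \<and> (\<forall>x y. E x y \<longrightarrow> E y x) \<and> (\<forall>x. \<not> E x x)"

definition deg_in :: "('a \<Rightarrow> 'a \<Rightarrow> bool) \<Rightarrow> 'a \<Rightarrow> 'a set \<Rightarrow> nat" where
  "deg_in E v X = card {x \<in> X. E v x}"

definition superextremal_two_clique ::
  "real \<Rightarrow> 'a set \<Rightarrow> ('a \<Rightarrow> 'a \<Rightarrow> bool) \<Rightarrow> 'a set \<Rightarrow> 'a set \<Rightarrow> bool" where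
  "superextremal_two_clique \<epsilon> V E A B \<longleftrightarrow>
     (let n = real (card V) in
       A \<union> B = V \<and> A \<inter> B = {} \<and>
       \<bar>real (card A) - real (card B)\<bar> \<le> \<epsilon> * n \<and>
       real (card {a \<in> A. real (deg_in E a A) < (1/2 - \<epsilon>) * n}) \<le> \<epsilon> * n \<and>
       (\<forall>a \<in> A. real (deg_in E a A) \<ge> (1/4 - \<epsilon>) * n) \<and>
       real (card {b \<in> B. real (deg_in E b B) < (1/2 - \<epsilon>) * n}) \<le> \<epsilon> * n \<and>
       (\<forall>b \<in> B. real (deg_in E b B) \<ge> (1/4 - \<epsilon>) * n))"

definition hamilton_cycle :: "'a set \<Rightarrow> ('a \<Rightarrow> 'a \<Rightarrow> bool) \<Rightarrow> 'a list \<Rightarrow> bool" where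
  "hamilton_cycle V E cs \<longleftrightarrow> distinct cs \<and> set cs = V \<and> length cs \<ge> 3 \<and>
     (\<forall>i < length cs. E (cs ! i) (cs ! ((i + 1) mod length cs)))"

definition cycle_contains_edge :: "'a list \<Rightarrow> 'a \<Rightarrow> 'a \<Rightarrow> bool" where
  "cycle_contains_edge cs u v \<longleftrightarrow>
     (\<exists>i < length cs. {cs ! i, cs ! ((i + 1) mod length cs)} = {u, v})"

end

theory Submission
  imports Defs
begin

text \<open>Each side of a superextremal two-clique is Hamilton-connected, so a Hamilton path of \<open>A\<close>
  from \<open>a\<close> to \<open>a'\<close> and one of \<open>B\<close> from \<open>b'\<close> to \<open>b\<close> close up, through the edges \<open>a'b'\<close> and
  \<open>ba\<close>, to the required Hamilton cycle. Within a side, the at most \<open>\<epsilon>n\<close> vertices of low degree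
  still have \<open>(1/4 - \<epsilon>)n\<close> neighbours, so they are threaded greedily into a short walk between
  the prescribed ends, each flanked by typical vertices. Every remaining vertex misses at most
  \<open>3\<epsilon>n/2\<close> vertices of its side; once the walk is longer than twice that, such a vertex has
  two consecutive neighbours on it and can be inserted between them.\<close>

fun is_walk :: "('a \<Rightarrow> 'a \<Rightarrow> bool) \<Rightarrow> 'a list \<Rightarrow> bool" where
  "is_walk E [] = True"
| "is_walk E [v] = True"
| "is_walk E (u # v # r) = (E u v \<and> is_walk E (v # r))"

lemma is_walk_Cons: "is_walk E (v # r) \<longleftrightarrow> (r = [] \<or> E v (hd r)) \<and> is_walk E r"
  by (cases r) auto

lemma is_walk_append:
  "is_walk E (xs @ ys) \<longleftrightarrow>
     is_walk E xs \<and> is_walk E ys \<and> (xs \<noteq> [] \<and> ys \<noteq> [] \<longrightarrow> E (last xs) (hd ys))"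
proof (induction xs)
  case (Cons x xs)
  then show ?case by (cases xs) (auto simp: is_walk_Cons)
qed simp

lemma is_walk_nth: "is_walk E p \<Longrightarrow> Suc i < length p \<Longrightarrow> E (p ! i) (p ! Suc i)"
proof (induction p arbitrary: i)
  case (Cons x xs)
  then show ?case by (cases i) (auto simp: is_walk_Cons hd_conv_nth)
qed simp

definition hamilton_path :: "('a \<Rightarrow> 'a \<Rightarrow> bool) \<Rightarrow> 'a set \<Rightarrow> 'a \<Rightarrow> 'a \<Rightarrow> 'a list \<Rightarrow> bool" where
  "hamilton_path E X x y p \<longleftrightarrow> is_walk E p \<and> distinct p \<and> set p = X \<and> hd p = x \<and> last p = y"

lemma hamilton_cycle_of_walk:
  assumes "is_walk E cs" "distinct cs" "set cs = V" "3 \<le> length cs" "E (last cs) (hd cs)"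
  shows "hamilton_cycle V E cs"
  unfolding hamilton_cycle_def
proof (intro conjI allI impI)
  fix i assume i: "i < length cs"
  show "E (cs ! i) (cs ! ((i + 1) mod length cs))"
  proof (cases "Suc i < length cs")
    case True
    then show ?thesis using is_walk_nth[OF assms(1)] by simp
  next
    case False
    then have "i = length cs - 1" "Suc i = length cs" using i by auto
    moreover have "cs \<noteq> []" using assms(4) by auto
    ultimately show ?thesis using assms(5) by (simp add: hd_conv_nth last_conv_nth)
  qed
qed (use assms in auto)

lemma cycle_contains_edge_nth:
  "Suc i < length cs \<Longrightarrow> cycle_contains_edge cs (cs ! i) (cs ! Suc i)"
  unfolding cycle_contains_edge_def by (intro exI[of _ i]) simp

lemma cycle_contains_edge_hd_last:
  assumes "cs \<noteq> []"
  shows "cycle_contains_edge cs (hd cs) (last cs)"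
  unfolding cycle_contains_edge_def
proof (intro exI[of _ "length cs - 1"] conjI)
  have "(length cs - 1 + 1) mod length cs = 0" using assms by simp
  then show "{cs ! (length cs - 1), cs ! ((length cs - 1 + 1) mod length cs)} = {hd cs, last cs}"
    using assms by (simp add: hd_conv_nth last_conv_nth insert_commute)
qed (use assms in simp)

lemma length_ge_2_if_hd_neq_last: "xs \<noteq> [] \<Longrightarrow> hd xs \<noteq> last xs \<Longrightarrow> 2 \<le> length xs"
  by (cases xs) (auto simp: Suc_le_eq)

lemma hamilton_cycle_join_paths:
  assumes sym: "\<And>u v. E u v \<Longrightarrow> E v u"
    and p: "hamilton_path E A a a' p" and q: "hamilton_path E B b' b q"
    and "A \<inter> B = {}" "a \<in> A" "b \<in> B" "a \<noteq> a'" "E a b" "E a' b'"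
  shows "\<exists>cs. hamilton_cycle (A \<union> B) E cs \<and> cycle_contains_edge cs a b \<and> cycle_contains_edge cs a' b'"
proof (intro exI[of _ "p @ q"] conjI)
  have "p \<noteq> []" "q \<noteq> []" using p q assms(5,6) by (auto simp: hamilton_path_def)
  then have "2 \<le> length p" using p assms(7) length_ge_2_if_hd_neq_last by (auto simp: hamilton_path_def)
  show "hamilton_cycle (A \<union> B) E (p @ q)"
  proof (rule hamilton_cycle_of_walk)
    show "is_walk E (p @ q)" using p q assms(9) \<open>p \<noteq> []\<close> \<open>q \<noteq> []\<close>
      by (simp add: hamilton_path_def is_walk_append)
    show "E (last (p @ q)) (hd (p @ q))" using p q sym[OF assms(8)] \<open>p \<noteq> []\<close> \<open>q \<noteq> []\<close>
      by (simp add: hamilton_path_def)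
    show "3 \<le> length (p @ q)" using \<open>2 \<le> length p\<close> \<open>q \<noteq> []\<close> by (cases q) auto
  qed (use p q assms(4) in \<open>auto simp: hamilton_path_def\<close>)
  show "cycle_contains_edge (p @ q) a b"
    using cycle_contains_edge_hd_last[of "p @ q"] p q \<open>p \<noteq> []\<close> \<open>q \<noteq> []\<close>
    by (simp add: hamilton_path_def)
  have "(p @ q) ! (length p - 1) = a'" "(p @ q) ! Suc (length p - 1) = b'"
    using p q \<open>p \<noteq> []\<close> \<open>q \<noteq> []\<close>
    by (auto simp: hamilton_path_def nth_append last_conv_nth hd_conv_nth)
  then show "cycle_contains_edge (p @ q) a' b'"
    using cycle_contains_edge_nth[of "length p - 1" "p @ q"] \<open>2 \<le> length p\<close> \<open>q \<noteq> []\<close>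
    by (cases q) auto
qed

lemma ex_notin_if_card_less: "finite B \<Longrightarrow> card B < card A \<Longrightarrow> \<exists>a\<in>A. a \<notin> B"
  by (meson card_mono linorder_not_less subsetI)

lemma card_filter_add_card_filter_not:
  "finite A \<Longrightarrow> card {u \<in> A. P u} + card {u \<in> A. \<not> P u} = card A"
proof -
  assume "finite A"
  then have "card ({u \<in> A. P u} \<union> {u \<in> A. \<not> P u}) = card {u \<in> A. P u} + card {u \<in> A. \<not> P u}"
    by (intro card_Un_disjoint) auto
  moreover have "{u \<in> A. P u} \<union> {u \<in> A. \<not> P u} = A" by auto
  ultimately show ?thesis by simp
qed

lemma ex_consecutive_satisfying:
  assumes "distinct p" and "2 * card {u \<in> set p. \<not> P u} + 1 < length p"
  shows "\<exists>i. Suc i < length p \<and> P (p ! i) \<and> P (p ! Suc i)"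
proof (rule ccontr)
  assume no_pair: "\<not> ?thesis"
  define Bad where "Bad = {u \<in> set p. \<not> P u}"
  define I where "I = {i. i < length p \<and> p ! i \<in> Bad}"
  define J where "J = {i. Suc i < length p \<and> p ! Suc i \<in> Bad}"
  have finite_I: "finite I" unfolding I_def by simp
  have finite_J: "finite J" by (rule finite_subset[of _ "{..<length p}"]) (auto simp: J_def)
  have "inj_on (nth p) I"
    using \<open>distinct p\<close> unfolding I_def inj_on_def by (simp add: nth_eq_iff_index_eq)
  then have "card I \<le> card Bad"
    by (rule card_inj_on_le) (auto simp: I_def Bad_def)
  moreover have "card J \<le> card I"
    using finite_I by (intro card_inj_on_le[of Suc]) (auto simp: I_def J_def)
  moreover have "length p - 1 \<le> card (I \<union> J)"
  proof -
    have "{..<length p - 1} \<subseteq> I \<union> J"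
    proof
      fix i assume "i \<in> {..<length p - 1}"
      then have "Suc i < length p" by simp
      then show "i \<in> I \<union> J"
        using no_pair nth_mem[of i p] nth_mem[of "Suc i" p] by (auto simp: I_def J_def Bad_def)
    qed
    moreover have "finite (I \<union> J)" using finite_I finite_J by simp
    ultimately show ?thesis using card_mono[of "I \<union> J" "{..<length p - 1}"] by simp
  qed
  ultimately have "length p - 1 \<le> 2 * card Bad"
    using card_Un_le[of I J] by linarith
  then show False using assms(2) unfolding Bad_def by linarith
qed

lemma walk_insert_vertex:
  assumes sym: "\<And>u v. E u v \<Longrightarrow> E v u"
    and walk: "is_walk E p" "distinct p" "z \<notin> set p"
    and few: "2 * card {u \<in> set p. \<not> E z u} + 1 < length p"
  shows "\<exists>p'. is_walk E p' \<and> distinct p' \<and> set p' = insert z (set p) \<and> hd p' = hd p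
     \<and> last p' = last p \<and> length p' = Suc (length p)"
proof -
  obtain i where i: "Suc i < length p" "E z (p ! i)" "E z (p ! Suc i)"
    using ex_consecutive_satisfying[OF walk(2) few] by blast
  define xs where "xs = take (Suc i) p"
  define ys where "ys = drop (Suc i) p"
  have p: "p = xs @ ys" unfolding xs_def ys_def by simp
  have "xs \<noteq> []" "ys \<noteq> []" using i by (auto simp: xs_def ys_def)
  have "last xs = p ! i" using i \<open>xs \<noteq> []\<close> by (simp add: xs_def last_conv_nth min_def)
  have "hd ys = p ! Suc i" using i by (simp add: ys_def hd_drop_conv_nth)
  have "is_walk E (xs @ z # ys)"
    using \<open>last xs = p ! i\<close> \<open>hd ys = p ! Suc i\<close> walk(1) \<open>xs \<noteq> []\<close> \<open>ys \<noteq> []\<close>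
      i(3) sym[OF i(2)]
    unfolding p by (auto simp: is_walk_append is_walk_Cons)
  moreover have "distinct (xs @ z # ys)" using walk(2,3) unfolding p by auto
  ultimately show ?thesis
    using \<open>xs \<noteq> []\<close> \<open>ys \<noteq> []\<close> unfolding p by (intro exI[of _ "xs @ z # ys"]) auto
qed

lemma walk_absorb:
  assumes sym: "\<And>u v. E u v \<Longrightarrow> E v u"
    and S: "finite S" "finite X" "S \<subseteq> X"
    and few: "\<And>z. z \<in> S \<Longrightarrow> real (card {u \<in> X. \<not> E z u}) \<le> K"
    and walk: "is_walk E p" "distinct p" "set p \<subseteq> X" "set p \<inter> S = {}"
    and long: "2 * K + 1 < real (length p)"
  shows "\<exists>p'. is_walk E p' \<and> distinct p' \<and> set p' = set p \<union> S \<and> hd p' = hd p \<and> last p' = last p"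
  using S(1,3) few walk long
proof (induction S arbitrary: p rule: finite_induct)
  case (insert z S)
  have z: "z \<in> X" "z \<notin> set p" using insert.prems(1,6) by auto
  have "card {u \<in> set p. \<not> E z u} \<le> card {u \<in> X. \<not> E z u}"
    using insert.prems(5) \<open>finite X\<close> by (intro card_mono) auto
  then have "2 * card {u \<in> set p. \<not> E z u} + 1 < length p"
    using insert.prems(2)[of z] insert.prems(7) by simp
  then obtain p1 where p1: "is_walk E p1" "distinct p1" "set p1 = insert z (set p)" "hd p1 = hd p"
      "last p1 = last p" "length p1 = Suc (length p)"
    using walk_insert_vertex[OF sym insert.prems(3,4) z(2)] by blast
  have "set p1 \<subseteq> X" "set p1 \<inter> S = {}" "2 * K + 1 < real (length p1)"
    using p1(3,6) z(1) insert.prems(5,6,7) insert.hyps(2) by auto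
  then obtain p' where "is_walk E p'" "distinct p'" "set p' = set p1 \<union> S" "hd p' = hd p1"
      "last p' = last p1"
    using insert.IH[of p1] insert.prems(1,2) p1(1,2) by blast
  then show ?case using p1(3-5) by (intro exI[of _ p']) auto
qed blast

locale near_clique =
  fixes E :: "'a \<Rightarrow> 'a \<Rightarrow> bool" and X L :: "'a set" and D K \<Lambda> :: real
  assumes sym: "\<And>u v. E u v \<Longrightarrow> E v u"
    and finite_X: "finite X" and L_subset: "L \<subseteq> X" and card_L: "real (card L) \<le> \<Lambda>"
    and min_degree: "\<And>v. v \<in> X \<Longrightarrow> D \<le> real (card {u \<in> X. E v u})"
    and few_non_neighbours: "\<And>v. v \<in> X - L \<Longrightarrow> real (card {u \<in> X. \<not> E v u}) \<le> K"
    and K_nonneg: "0 \<le> K"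
    and degree_large: "3 * K + 4 * \<Lambda> + 20 < D"
begin

lemma finite_L: "finite L"
  using L_subset finite_X finite_subset by blast

lemma \<Lambda>_nonneg: "0 \<le> \<Lambda>"
  using card_L by (meson of_nat_0_le_iff order_trans)

lemma ex_typical_common_neighbour:
  assumes "e \<in> X - L" "w \<in> X" "real (length us) + K + \<Lambda> < D"
  shows "\<exists>h\<in>X - L. h \<notin> set us \<and> E e h \<and> E w h"
proof -
  define C where "C = {u \<in> X. \<not> E e u} \<union> L \<union> set us"
  have "card C \<le> card ({u \<in> X. \<not> E e u} \<union> L) + card (set us)"
    unfolding C_def by (rule card_Un_le)
  also have "\<dots> \<le> card {u \<in> X. \<not> E e u} + card L + length us"
    using card_Un_le[of "{u \<in> X. \<not> E e u}" L] card_length[of us] by linarith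
  finally have "card C \<le> card {u \<in> X. \<not> E e u} + card L + length us" .
  then have "card C < card {u \<in> X. E w u}"
    using few_non_neighbours[OF assms(1)] min_degree[OF assms(2)] card_L assms(3) by linarith
  moreover have "finite C" unfolding C_def using finite_X finite_L by simp
  ultimately obtain h where "h \<in> {u \<in> X. E w u}" "h \<notin> C"
    using ex_notin_if_card_less by blast
  then show ?thesis unfolding C_def by auto
qed

lemma ex_typical_neighbour:
  assumes "w \<in> X" "real (length us) + \<Lambda> < D"
  shows "\<exists>h\<in>X - L. h \<notin> set us \<and> E w h"
proof -
  have "card (L \<union> set us) < card {u \<in> X. E w u}"
    using min_degree[OF assms(1)] card_L assms(2) card_Un_le[of L "set us"] card_length[of us]
    by linarith
  then obtain h where "h \<in> {u \<in> X. E w u}" "h \<notin> L \<union> set us"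
    using ex_notin_if_card_less[of "L \<union> set us"] finite_L by blast
  then show ?thesis by auto
qed

text \<open>Walks are grown at their head, which is kept outside \<open>L\<close> so that it always has
  common neighbours with other vertices; \<open>x\<close> is reserved to become the final head.\<close>

definition extendable :: "'a \<Rightarrow> 'a list \<Rightarrow> bool" where
  "extendable x r \<longleftrightarrow> is_walk E r \<and> distinct r \<and> r \<noteq> [] \<and> hd r \<in> X - L \<and> set r \<subseteq> X \<and> x \<notin> set r"

lemma extendable_absorb_exceptional:
  assumes "finite T" "T \<subseteq> L" "extendable x r" "set r \<inter> T = {}" "x \<notin> T"
    and "real (length r) + 3 * real (card T) + 2 + K + \<Lambda> < D"
  shows "\<exists>r'. extendable x r' \<and> last r' = last r \<and> set r \<union> T \<subseteq> set r'
    \<and> length r' \<le> length r + 3 * card T"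
  using assms
proof (induction T arbitrary: r rule: finite_induct)
  case (insert l T)
  have card_T: "card (insert l T) = Suc (card T)" using insert.hyps by simp
  have l: "l \<in> X" and "l \<in> L" using insert.prems(1) L_subset by auto
  have r: "hd r \<in> X - L" using insert.prems(2) by (simp add: extendable_def)
  have "real (length (x # r)) + K + \<Lambda> < D" using insert.prems(5) card_T by simp
  then obtain h1 where h1: "h1 \<in> X - L" "h1 \<notin> set (x # r)" "E (hd r) h1" "E l h1"
    using ex_typical_common_neighbour[OF r l] by blast
  have "real (length (h1 # x # r)) + \<Lambda> < D" using insert.prems(5) card_T K_nonneg by simp
  then obtain h2 where h2: "h2 \<in> X - L" "h2 \<notin> set (h1 # x # r)" "E l h2"
    using ex_typical_neighbour[OF l] by blast
  define r1 where "r1 = h2 # l # h1 # r"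
  have "extendable x r1"
    using insert.prems(2,3,4) h1 h2 l \<open>l \<in> L\<close> sym[OF h1(3)] sym[OF h2(3)]
    unfolding r1_def extendable_def by (auto simp: is_walk_Cons)
  moreover have "set r1 \<inter> T = {}"
    using insert.prems(1,3) insert.hyps(2) h1(1) h2(1) unfolding r1_def by auto
  moreover have "last r1 = last r"
    using insert.prems(2) unfolding r1_def extendable_def by simp
  moreover have "real (length r1) + 3 * real (card T) + 2 + K + \<Lambda> < D"
    using insert.prems(5) card_T unfolding r1_def by simp
  moreover have "T \<subseteq> L" "x \<notin> T" using insert.prems(1,4) by auto
  ultimately obtain r' where "extendable x r'" "last r' = last r" "set r1 \<union> T \<subseteq> set r'"
      "length r' \<le> length r1 + 3 * card T"
    using insert.IH[of r1] by auto
  then show ?case using card_T unfolding r1_def by (intro exI[of _ r']) auto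
qed (use order_refl in fastforce)

lemma extendable_lengthen:
  assumes "extendable x r" "real (length r) + real j + 1 + K + \<Lambda> < D"
  shows "\<exists>r'. extendable x r' \<and> last r' = last r \<and> set r \<subseteq> set r' \<and> length r' = length r + j"
  using assms
proof (induction j arbitrary: r)
  case (Suc j)
  have r: "hd r \<in> X - L" using Suc.prems(1) by (simp add: extendable_def)
  have "real (length (x # r)) + K + \<Lambda> < D" using Suc.prems(2) by simp
  then obtain h where h: "h \<in> X - L" "h \<notin> set (x # r)" "E (hd r) h"
    using ex_typical_common_neighbour[OF r r[THEN DiffD1]] by blast
  have "extendable x (h # r)" "last (h # r) = last r"
    using Suc.prems(1) h sym[OF h(3)] unfolding extendable_def by (auto simp: is_walk_Cons)
  moreover have "real (length (h # r)) + real j + 1 + K + \<Lambda> < D" using Suc.prems by simp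
  ultimately obtain r' where "extendable x r'" "last r' = last r" "set (h # r) \<subseteq> set r'"
      "length r' = length (h # r) + j"
    using Suc.IH by metis
  then show ?case by (intro exI[of _ r']) auto
qed auto

end

context near_clique
begin

lemma ex_extendable_covering_exceptional:
  assumes "x \<in> X" "y \<in> X" "x \<noteq> y"
  shows "\<exists>r. extendable x r \<and> last r = y \<and> L - {x} \<subseteq> set r \<and> real (length r) \<le> 2 + 3 * \<Lambda>"
proof -
  have "real (length [x, y]) + \<Lambda> < D" using degree_large K_nonneg \<Lambda>_nonneg by simp
  then obtain h0 where h0: "h0 \<in> X - L" "h0 \<notin> set [x, y]" "E y h0"
    using ex_typical_neighbour[OF assms(2)] by blast
  define T where "T = L - {x, y}"
  have T_L: "T \<subseteq> L" by (auto simp: T_def)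
  then have "card T \<le> card L" by (rule card_mono[OF finite_L])
  then have card_T: "real (card T) \<le> \<Lambda>" using card_L by linarith
  have "extendable x [h0, y]" using h0 sym[OF h0(3)] assms unfolding extendable_def by auto
  moreover have "set [h0, y] \<inter> T = {}" "x \<notin> T" using h0 unfolding T_def by auto
  moreover have "real (length [h0, y]) + 3 * real (card T) + 2 + K + \<Lambda> < D"
    using card_T degree_large K_nonneg by simp
  ultimately have "\<exists>r. extendable x r \<and> last r = last [h0, y] \<and> set [h0, y] \<union> T \<subseteq> set r
      \<and> length r \<le> length [h0, y] + 3 * card T"
    by (rule extendable_absorb_exceptional[OF finite_subset[OF T_L finite_L] T_L])
  then obtain r where r: "extendable x r" "last r = y" "set [h0, y] \<union> T \<subseteq> set r"
      "length r \<le> 2 + 3 * card T"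
    by auto
  have "real (length r) \<le> 2 + 3 * real (card T)" using r(4) by simp
  then have "real (length r) \<le> 2 + 3 * \<Lambda>" using card_T by linarith
  moreover have "L - {x} \<subseteq> set r" using r(3) by (auto simp: T_def)
  ultimately show ?thesis using r(1,2) by blast
qed

lemma ex_long_walk_covering_exceptional:
  assumes "x \<in> X" "y \<in> X" "x \<noteq> y"
  shows "\<exists>q. is_walk E q \<and> distinct q \<and> set q \<subseteq> X \<and> L \<subseteq> set q \<and> hd q = x \<and> last q = y
    \<and> 2 * K + 1 < real (length q)"
proof -
  obtain r1 where r1: "extendable x r1" "last r1 = y" "L - {x} \<subseteq> set r1"
      "real (length r1) \<le> 2 + 3 * \<Lambda>"
    using ex_extendable_covering_exceptional[OF assms] by blast
  define j where "j = nat \<lceil>2 * K\<rceil> + 3"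
  have j: "real j \<le> 2 * K + 4" "2 * K + 3 \<le> real j" unfolding j_def using K_nonneg by linarith+
  have "real (length r1) + real j + 1 + K + \<Lambda> < D"
    using r1(4) j degree_large K_nonneg \<Lambda>_nonneg by linarith
  then obtain r where r: "extendable x r" "last r = y" "set r1 \<subseteq> set r" "length r = length r1 + j"
    using extendable_lengthen[OF r1(1)] r1(2) by auto
  have length_r: "real (length r) \<le> 6 + 2 * K + 3 * \<Lambda>" using r(4) r1(4) j by simp
  have "real (length (x # r)) + \<Lambda> < D"
    using length_r degree_large K_nonneg \<Lambda>_nonneg by simp
  then obtain hx where hx: "hx \<in> X - L" "hx \<notin> set (x # r)" "E x hx"
    using ex_typical_neighbour[OF assms(1)] by blast
  have hd_r: "hd r \<in> X - L" using r(1) by (simp add: extendable_def)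
  have "real (length (hx # x # r)) + K + \<Lambda> < D"
    using length_r degree_large K_nonneg \<Lambda>_nonneg by simp
  then obtain h where h: "h \<in> X - L" "h \<notin> set (hx # x # r)" "E (hd r) h" "E hx h"
    using ex_typical_common_neighbour[OF hd_r hx(1)[THEN DiffD1]] by blast
  have "is_walk E (x # hx # h # r)" "distinct (x # hx # h # r)" "set (x # hx # h # r) \<subseteq> X"
    using r(1) hx h sym[OF h(3)] assms(1) unfolding extendable_def by (auto simp: is_walk_Cons)
  moreover have "last (x # hx # h # r) = y" using r unfolding extendable_def by simp
  moreover have "L \<subseteq> set (x # hx # h # r)" using r1(3) r(3) by auto
  moreover have "2 * K + 1 < real (length (x # hx # h # r))" using r(4) j by simp
  moreover have "hd (x # hx # h # r) = x" by simp
  ultimately show ?thesis by blast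
qed

theorem hamilton_connected:
  assumes "x \<in> X" "y \<in> X" "x \<noteq> y"
  shows "\<exists>p. hamilton_path E X x y p"
proof -
  obtain q where q: "is_walk E q" "distinct q" "set q \<subseteq> X" "L \<subseteq> set q" "hd q = x" "last q = y"
      "2 * K + 1 < real (length q)"
    using ex_long_walk_covering_exceptional[OF assms] by blast
  have few: "\<And>z. z \<in> X - set q \<Longrightarrow> real (card {u \<in> X. \<not> E z u}) \<le> K"
    using few_non_neighbours q(4) by blast
  obtain p where "is_walk E p" "distinct p" "set p = set q \<union> (X - set q)" "hd p = x" "last p = y"
    using walk_absorb[OF sym finite_Diff[OF finite_X] finite_X Diff_subset few q(1-3) Diff_disjoint q(7)]
      q(5,6) by auto
  then show ?thesis using q(3) unfolding hamilton_path_def by (intro exI[of _ p]) auto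
qed

end

lemma superextremal_two_clique_swap:
  "superextremal_two_clique \<epsilon> V E A B \<Longrightarrow> superextremal_two_clique \<epsilon> V E B A"
  unfolding superextremal_two_clique_def Let_def by (auto simp: abs_minus_commute)

lemma superextremal_two_clique_hamilton_connected:
  fixes \<epsilon> :: real
  assumes sym: "\<And>u v. E u v \<Longrightarrow> E v u" and "finite V"
    and G: "superextremal_two_clique \<epsilon> V E A B"
    and \<epsilon>: "0 \<le> \<epsilon>" "\<epsilon> \<le> 1/100" and large: "1000 \<le> card V"
    and xy: "x \<in> A" "y \<in> A" "x \<noteq> y"
  shows "\<exists>p. hamilton_path E A x y p"
proof -
  define n where "n = real (card V)"
  define L where "L = {a \<in> A. real (deg_in E a A) < (1/2 - \<epsilon>) * n}"
  have AB: "A \<union> B = V" "A \<inter> B = {}" "\<bar>real (card A) - real (card B)\<bar> \<le> \<epsilon> * n"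
    and card_L: "real (card L) \<le> \<epsilon> * n"
    and min_deg: "\<forall>a \<in> A. real (deg_in E a A) \<ge> (1/4 - \<epsilon>) * n"
    using G unfolding superextremal_two_clique_def Let_def L_def n_def by auto
  have "finite A" "finite B" using AB(1) \<open>finite V\<close> by auto
  then have "real (card A) + real (card B) = n"
    using card_Un_disjoint[of A B] AB(1,2) unfolding n_def by simp
  then have card_A: "real (card A) \<le> (n + \<epsilon> * n) / 2" using AB(3) by (simp add: abs_le_iff)
  have n: "1000 \<le> n" "\<epsilon> * n \<le> n / 100"
    using large \<epsilon> unfolding n_def by (simp_all add: mult_right_mono)
  interpret near_clique E A L "(1/4 - \<epsilon>) * n" "3/2 * \<epsilon> * n" "\<epsilon> * n"
  proof
    fix v assume v: "v \<in> A - L"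
    have "card {u \<in> A. E v u} + card {u \<in> A. \<not> E v u} = card A"
      using \<open>finite A\<close> by (rule card_filter_add_card_filter_not)
    moreover have "real (card {u \<in> A. E v u}) \<ge> (1/2 - \<epsilon>) * n"
      using v unfolding L_def deg_in_def by auto
    ultimately show "real (card {u \<in> A. \<not> E v u}) \<le> 3/2 * \<epsilon> * n"
      using card_A by (simp add: algebra_simps)
  next
    have "3 * (3/2 * \<epsilon> * n) + 4 * (\<epsilon> * n) + 20 = 17/2 * (\<epsilon> * n) + 20"
      "(1/4 - \<epsilon>) * n = n / 4 - \<epsilon> * n"
      by (simp_all add: algebra_simps)
    then show "3 * (3/2 * \<epsilon> * n) + 4 * (\<epsilon> * n) + 20 < (1/4 - \<epsilon>) * n"
      using n by linarith
  qed (use sym \<open>finite A\<close> card_L min_deg \<epsilon> n in \<open>auto simp: L_def deg_in_def\<close>)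
  show ?thesis using hamilton_connected[OF xy] .
qed

theorem mainTheorem8:
  "\<exists>\<epsilon>0 > (0::real). \<exists>n0::nat. \<forall>\<epsilon> n (V :: nat set) E A B a b a' b'.
     0 < \<epsilon> \<and> \<epsilon> \<le> \<epsilon>0 \<and> n \<ge> n0 \<and>
     simple_graph V E \<and> card V = n \<and>
     superextremal_two_clique \<epsilon> V E A B \<and>
     a \<in> A \<and> b \<in> B \<and> E a b \<and> a' \<in> A \<and> b' \<in> B \<and> E a' b' \<and>
     a \<noteq> a' \<and> b \<noteq> b'
     \<longrightarrow> (\<exists>cs. hamilton_cycle V E cs \<and> cycle_contains_edge cs a b \<and> cycle_contains_edge cs a' b')"
proof (intro exI[of _ "1/100"] conjI exI[of _ "1000::nat"] allI impI)
  fix \<epsilon> :: real and n and V :: "nat set" and E A B a b a' b'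
  assume H: "0 < \<epsilon> \<and> \<epsilon> \<le> 1/100 \<and> n \<ge> 1000 \<and> simple_graph V E \<and> card V = n \<and>
     superextremal_two_clique \<epsilon> V E A B \<and>
     a \<in> A \<and> b \<in> B \<and> E a b \<and> a' \<in> A \<and> b' \<in> B \<and> E a' b' \<and> a \<noteq> a' \<and> b \<noteq> b'"
  then have G: "superextremal_two_clique \<epsilon> V E A B" and \<epsilon>: "0 \<le> \<epsilon>" "\<epsilon> \<le> 1/100"
    and sym: "\<And>u v. E u v \<Longrightarrow> E v u" and V: "finite V" "1000 \<le> card V"
    and ends: "a \<in> A" "a' \<in> A" "a \<noteq> a'" "b \<in> B" "b' \<in> B" "b' \<noteq> b" and "E a b" "E a' b'"
    by (auto simp: simple_graph_def)
  obtain p where p: "hamilton_path E A a a' p"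
    using superextremal_two_clique_hamilton_connected[OF sym V(1) G \<epsilon> V(2) ends(1-3)] by blast
  obtain q where q: "hamilton_path E B b' b q"
    using superextremal_two_clique_hamilton_connected[OF sym V(1) superextremal_two_clique_swap[OF G]
        \<epsilon> V(2) ends(5,4,6)] by blast
  have "A \<union> B = V" "A \<inter> B = {}"
    using G by (simp_all add: superextremal_two_clique_def Let_def)
  then show "\<exists>cs. hamilton_cycle V E cs \<and> cycle_contains_edge cs a b \<and> cycle_contains_edge cs a' b'"
    using hamilton_cycle_join_paths[OF sym p q _ ends(1,4,3) \<open>E a b\<close> \<open>E a' b'\<close>] by simp
qed simp

end
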